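(* Let $p\ge1$ and $n>p$ be integers. Let $z$ be a real even eigenfunction of order $n$ with eigenvalue $\Lambda>0$, and write $$z=R+P,\qquad R(x)=\sum_{j=0}^{2p-1} r_j e^{i\lambda_j x},$$ where: - $\lambda_0,\dots,\lambda_{2p-1}$ are the distinct roots of $\lambda^{2p}=\Lambda$, and - $P$ is a polynomial. Then $R$ is even, so $R(x)=\rho(x^2)$ for a real-analytic function $\rho$. Moreover $$\rho^{(k)}(1)=0\qquad\text{for all }k\in\{n-p,\,n-p+1,\dots,n-1\}.$$
   Context: Fix an integer $p\ge1$. For an integer $k\ge p$ and real $\Lambda$, the differential operator on $[-1,1]$ is $$L^{2k}(\Lambda)=(-1)^k\frac{d^{2k}}{dx^{2k}}-\Lambda(-1)^{k-p}\frac{d^{2k-2p}}{dx^{2k-2p}}.$$ An eigenfunction of order $n$ with eigenvalue $\Lambda$ is a nonzero real $z\in C^{2n}[-1,1]$ such that: - $L^{2n}(\Lambda)z=0$ on $[-1,1]$, and - $z^{(j)}(\pm1)=0$ for $j=0,\dots,n-1$. Such $z$ is a linear combination of the exponentials $e^{i\lambda_j x}$ and a polynomial of degree at most $2n-2p-1$. *)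

theory Defs
  imports "HOL-Analysis.Analysis" "HOL-Computational_Algebra.Polynomial"
begin

definition real_analytic_on :: "real set \<Rightarrow> (real \<Rightarrow> real) \<Rightarrow> bool" where
  "real_analytic_on S f \<longleftrightarrow>
     (\<forall>x\<in>S. \<exists>(a::nat \<Rightarrow> real) d. d > 0 \<and>
        (\<forall>y. \<bar>y - x\<bar> < d \<longrightarrow> (\<lambda>k. a k * (y - x) ^ k) sums f y))"

definition eigenfunction :: "nat \<Rightarrow> nat \<Rightarrow> real \<Rightarrow> (real \<Rightarrow> real) \<Rightarrow> bool" where
  "eigenfunction p n Lam z \<longleftrightarrow> p \<le> n \<and>
     (\<exists>D :: nat \<Rightarrow> real \<Rightarrow> real.
        (\<forall>x\<in>{-1..1}. D 0 x = z x) \<and>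
        (\<forall>k<2*n. \<forall>x\<in>{-1..1}. (D k has_real_derivative D (Suc k) x) (at x within {-1..1})) \<and>
        continuous_on {-1..1} (D (2*n)) \<and>
        (\<forall>x\<in>{-1..1}. (-1)^n * D (2*n) x - Lam * (-1)^(n-p) * D (2*n-2*p) x = 0) \<and>
        (\<forall>j<n. D j (-1) = 0 \<and> D j 1 = 0)) \<and>
     (\<exists>x\<in>{-1..1}. z x \<noteq> 0)"

end

theory Submission
  imports Defs "HOL-Complex_Analysis.Complex_Analysis"
begin

text \<open>Extend z to the entire function Z = R + P. Since every exponent of R is a 2p-th root of
  c = (-1)^p Lam, R satisfies Z^(2n) = c Z^(2n-2p) identically, so the eigenvalue equation
  forces P^(2n-2p) to satisfy the equation of order 2p with nonzero constant, which no
  nonzero polynomial does: deg P < 2n - 2p. The same rigidity, together with the identity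
  theorem, shows that two such exponential sums differing by a polynomial on (-1,1) coincide;
  comparing R(x) with R(-x) and with its conjugate makes R even and real on the real line.
  Then R(w) = g(w^2) and P(w) = pi(w^2) with g entire and deg pi < n - p, and the boundary
  conditions Z^(j)(1) = 0 for j < n pass through the square root near u = 1 to g + pi,
  giving g^(k)(1) = 0 for n - p \<le> k < n.\<close>

definition exp_sum :: "nat \<Rightarrow> (nat \<Rightarrow> complex) \<Rightarrow> (nat \<Rightarrow> complex) \<Rightarrow> complex \<Rightarrow> complex" where
  "exp_sum m a \<mu> w = (\<Sum>j<m. a j * exp (\<mu> j * w))"

lemma exp_sum_has_field_derivative:
  "(exp_sum m a \<mu> has_field_derivative exp_sum m (\<lambda>j. a j * \<mu> j) \<mu> w) (at w)"
  unfolding exp_sum_def by (auto intro!: derivative_eq_intros sum.cong simp: algebra_simps)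

lemma holomorphic_exp_sum [holomorphic_intros]: "exp_sum m a \<mu> holomorphic_on S"
  by (metis exp_sum_has_field_derivative field_differentiable_at_within
      field_differentiable_def holomorphic_on_def)

lemma higher_deriv_exp_sum: "(deriv ^^ k) (exp_sum m a \<mu>) = exp_sum m (\<lambda>j. a j * \<mu> j ^ k) \<mu>"
proof (induction k)
  case (Suc k)
  then show ?case
    using DERIV_imp_deriv[OF exp_sum_has_field_derivative] by (simp add: mult_ac)
qed simp

lemma higher_deriv_exp_sum_roots:
  assumes "\<forall>j<m. \<mu> j ^ q = c"
  shows "(deriv ^^ (k + q)) (exp_sum m a \<mu>) w = c * (deriv ^^ k) (exp_sum m a \<mu>) w"
  using assms unfolding higher_deriv_exp_sum exp_sum_def
  by (simp add: sum_distrib_left power_add mult_ac)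

lemma cnj_exp_sum: "cnj (exp_sum m a \<mu> w) = exp_sum m (\<lambda>j. cnj (a j)) (\<lambda>j. cnj (\<mu> j)) (cnj w)"
  by (simp add: exp_sum_def exp_cnj)

lemma higher_deriv_poly: "(deriv ^^ k) (poly P) = poly ((pderiv ^^ k) P)"
  for P :: "'a::real_normed_field poly"
proof (induction k)
  case (Suc k)
  have "deriv (poly Q) = poly (pderiv Q)" for Q :: "'a poly"
    by (simp add: fun_eq_iff DERIV_imp_deriv[OF poly_DERIV])
  with Suc show ?case by simp
qed simp

lemma higher_pderiv_eq_0: "degree P < k \<Longrightarrow> (pderiv ^^ k) P = 0"
  for P :: "'a::{idom,ring_char_0} poly"
  by (rule poly_eqI) (simp add: coeff_higher_pderiv coeff_eq_0)

lemma higher_pderiv_eq_0_mono: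
  assumes "(pderiv ^^ k) P = 0" "k \<le> l"
  shows "(pderiv ^^ l) P = 0"
proof -
  have "(pderiv ^^ l) P = (pderiv ^^ (l - k)) ((pderiv ^^ k) P)"
    using assms(2) by (metis le_add_diff_inverse2 funpow_add o_apply)
  then show ?thesis using assms(1) by simp
qed

lemma poly_eq_0_if_higher_pderiv_eq_smult:
  fixes Q :: "'a::{idom,ring_char_0} poly"
  assumes "(pderiv ^^ q) Q = smult c Q" "c \<noteq> 0" "q \<ge> 1"
  shows "Q = 0"
proof -
  have "degree Q - q = degree Q"
    using assms(1,2) by (metis degree_higher_pderiv degree_smult_eq)
  then have "(pderiv ^^ q) Q = 0"
    using assms(3) by (intro higher_pderiv_eq_0) linarith
  then show ?thesis using assms(1,2) by simp
qed

lemma entire_eq_0_if_eq_0_on_interval: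
  fixes f :: "complex \<Rightarrow> complex"
  assumes "f holomorphic_on UNIV" "\<And>x. x \<in> {-1<..<1} \<Longrightarrow> f (of_real x) = 0"
  shows "f w = 0"
proof (rule analytic_continuation[OF assms(1), where U="of_real ` {-1<..<1}" and \<xi>=0])
  show "0 islimpt (of_real ` {-1<..<(1::real)} :: complex set)"
    unfolding islimpt_approachable
  proof (intro allI impI)
    fix e :: real assume "e > 0"
    then show "\<exists>x'\<in>(of_real ` {-1<..<(1::real)} :: complex set). x' \<noteq> 0 \<and> dist x' 0 < e"
      by (intro bexI[where x="complex_of_real (min (e/2) (1/2))"]) (auto simp: dist_norm)
  qed
qed (use assms in auto)

lemma exp_sum_eq_if_diff_poly:
  assumes "\<forall>j<m. \<mu> j ^ q = c" "\<forall>j<m. \<nu> j ^ q = c" "c \<noteq> 0" "q \<ge> 1"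
    and "\<And>x. x \<in> {-1<..<1} \<Longrightarrow>
           exp_sum m a \<mu> (of_real x) - exp_sum m b \<nu> (of_real x) = poly Q (of_real x)"
  shows "exp_sum m a \<mu> w = exp_sum m b \<nu> w"
proof -
  define F where "F w = exp_sum m a \<mu> w - exp_sum m b \<nu> w" for w
  have F_poly: "F = poly Q"
  proof
    fix w
    have "(\<lambda>w. F w - poly Q w) holomorphic_on UNIV"
      unfolding F_def by (intro holomorphic_intros)
    from entire_eq_0_if_eq_0_on_interval[OF this] assms(5) show "F w = poly Q w"
      by (simp add: F_def)
  qed
  have "(deriv ^^ q) F w = c * F w" for w
    unfolding F_def
    by (subst higher_deriv_diff[where S=UNIV])
       (auto intro: holomorphic_intros simp: right_diff_distrib
         higher_deriv_exp_sum_roots[OF assms(1), where k=0, simplified]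
         higher_deriv_exp_sum_roots[OF assms(2), where k=0, simplified])
  then have "(pderiv ^^ q) Q = smult c Q"
    by (intro poly_ext) (simp add: F_poly higher_deriv_poly)
  then have "Q = 0"
    using assms(3,4) by (rule poly_eq_0_if_higher_pderiv_eq_smult)
  then show ?thesis
    using F_poly by (simp add: F_def fun_eq_iff)
qed

lemma higher_pderiv_eq_0_if_exp_poly_ode:
  assumes "\<forall>j<m. \<mu> j ^ q = c" "c \<noteq> 0" "q \<ge> 1"
    and "\<And>x. x \<in> {-1<..<1} \<Longrightarrow>
           (deriv ^^ (N + q)) (\<lambda>w. exp_sum m r \<mu> w + poly P w) (of_real x)
           = c * (deriv ^^ N) (\<lambda>w. exp_sum m r \<mu> w + poly P w) (of_real x)"
  shows "(pderiv ^^ N) P = 0"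
proof -
  have split: "(deriv ^^ k) (\<lambda>w. exp_sum m r \<mu> w + poly P w) w
      = (deriv ^^ k) (exp_sum m r \<mu>) w + poly ((pderiv ^^ k) P) w" for k w
    by (subst higher_deriv_add[where S=UNIV]) (auto intro: holomorphic_intros simp: higher_deriv_poly)
  have ode_poly: "poly ((pderiv ^^ (N + q)) P - smult c ((pderiv ^^ N) P)) w = 0" for w
  proof (rule entire_eq_0_if_eq_0_on_interval[where f="poly _"])
    fix x :: real assume "x \<in> {-1<..<1}"
    then have "(deriv ^^ (N + q)) (exp_sum m r \<mu>) (of_real x)
          + poly ((pderiv ^^ (N + q)) P) (of_real x)
        = c * ((deriv ^^ N) (exp_sum m r \<mu>) (of_real x) + poly ((pderiv ^^ N) P) (of_real x))"
      using assms(4) by (simp only: split)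
    then show "poly ((pderiv ^^ (N + q)) P - smult c ((pderiv ^^ N) P)) (of_real x) = 0"
      by (simp add: higher_deriv_exp_sum_roots[OF assms(1)] distrib_left)
  qed (intro holomorphic_intros)
  have "(pderiv ^^ (N + q)) P = (pderiv ^^ q) ((pderiv ^^ N) P)"
    by (metis add.commute funpow_add o_apply)
  moreover have "(pderiv ^^ (N + q)) P - smult c ((pderiv ^^ N) P) = 0"
    using ode_poly by (intro poly_ext) simp
  ultimately have "(pderiv ^^ q) ((pderiv ^^ N) P) = smult c ((pderiv ^^ N) P)"
    by simp
  then show ?thesis
    using assms(2,3) by (rule poly_eq_0_if_higher_pderiv_eq_smult)
qed

lemma exp_sum_even_if_exp_poly_even:
  assumes "\<forall>j<m. \<mu> j ^ q = c" "even q" "c \<noteq> 0" "q \<ge> 1"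
    and "\<And>x. x \<in> {-1<..<1} \<Longrightarrow>
           exp_sum m r \<mu> (of_real x) + poly P (of_real x)
           = exp_sum m r \<mu> (- of_real x) + poly P (- of_real x)"
  shows "exp_sum m r \<mu> (- w) = exp_sum m r \<mu> w" and "poly P (- w) = poly P w"
proof -
  have reflect: "exp_sum m r \<mu> (- w) = exp_sum m r (\<lambda>j. - \<mu> j) w" for w
    by (simp add: exp_sum_def)
  have mirror_eq: "exp_sum m r \<mu> w = exp_sum m r (\<lambda>j. - \<mu> j) w" for w
  proof (rule exp_sum_eq_if_diff_poly[where Q="pcompose P [:0, -1:] - P"])
    show "\<forall>j<m. (- \<mu> j) ^ q = c" using assms(1,2) by simp
    fix x :: real assume "x \<in> {-1<..<1}"
    then show "exp_sum m r \<mu> (of_real x) - exp_sum m r (\<lambda>j. - \<mu> j) (of_real x)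
        = poly (pcompose P [:0, -1:] - P) (of_real x)"
      using assms(5) by (simp add: reflect[symmetric] poly_pcompose algebra_simps)
  qed (use assms in auto)
  show E_sym: "exp_sum m r \<mu> (- w) = exp_sum m r \<mu> w" for w
    by (simp only: mirror_eq[of w] reflect[of w])
  have "poly P (- w) - poly P w = 0"
  proof (rule entire_eq_0_if_eq_0_on_interval[where f="\<lambda>w. poly P (- w) - poly P w"])
    fix x :: real assume "x \<in> {-1<..<1}"
    then show "poly P (- of_real x) - poly P (of_real x) = 0"
      using assms(5) E_sym[of "of_real x"] by force
  qed (intro holomorphic_intros)
  then show "poly P (- w) = poly P w" by simp
qed

lemma exp_sum_real_if_exp_poly_real:
  assumes "\<forall>j<m. \<mu> j ^ q = c" "c \<in> \<real>" "c \<noteq> 0" "q \<ge> 1"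
    and "\<And>x. x \<in> {-1<..<1} \<Longrightarrow> exp_sum m r \<mu> (of_real x) + poly P (of_real x) \<in> \<real>"
  shows "exp_sum m r \<mu> (of_real x) \<in> \<real>"
proof -
  have E_cnj: "exp_sum m r \<mu> w = exp_sum m (\<lambda>j. cnj (r j)) (\<lambda>j. cnj (\<mu> j)) w" for w
  proof (rule exp_sum_eq_if_diff_poly[where Q="map_poly cnj P - P"])
    show "\<forall>j<m. cnj (\<mu> j) ^ q = c"
      using assms(1,2) by (metis Reals_cnj_iff complex_cnj_power)
    fix x :: real assume "x \<in> {-1<..<1}"
    then have real: "cnj (exp_sum m r \<mu> (of_real x) + poly P (of_real x))
        = exp_sum m r \<mu> (of_real x) + poly P (of_real x)"
      using assms(5) Reals_cnj_iff by blast
    have "cnj (exp_sum m r \<mu> (of_real x))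
        = exp_sum m (\<lambda>j. cnj (r j)) (\<lambda>j. cnj (\<mu> j)) (of_real x)"
      by (simp only: cnj_exp_sum complex_cnj_complex_of_real)
    moreover have "cnj (poly P (of_real x)) = poly (map_poly cnj P) (of_real x)"
      by (simp only: poly_cnj complex_cnj_complex_of_real)
    ultimately have "exp_sum m (\<lambda>j. cnj (r j)) (\<lambda>j. cnj (\<mu> j)) (of_real x)
        + poly (map_poly cnj P) (of_real x) = exp_sum m r \<mu> (of_real x) + poly P (of_real x)"
      using real by (simp only: complex_cnj_add)
    then have "exp_sum m r \<mu> (of_real x) - exp_sum m (\<lambda>j. cnj (r j)) (\<lambda>j. cnj (\<mu> j)) (of_real x)
        = poly (map_poly cnj P) (of_real x) - poly P (of_real x)"
      by algebra
    then show "exp_sum m r \<mu> (of_real x) - exp_sum m (\<lambda>j. cnj (r j)) (\<lambda>j. cnj (\<mu> j)) (of_real x)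
        = poly (map_poly cnj P - P) (of_real x)"
      by (simp only: poly_diff)
  qed (use assms in auto)
  then show ?thesis
    unfolding Reals_cnj_iff cnj_exp_sum by simp
qed

text \<open>For even entire f, this series of even Taylor coefficients is the entire g with
  g(w^2) = f(w).\<close>
definition unsquare :: "(complex \<Rightarrow> complex) \<Rightarrow> complex \<Rightarrow> complex" where
  "unsquare f u = (\<Sum>k. (deriv ^^ (2 * k)) f 0 / fact (2 * k) * u ^ k)"

lemma sums_unsquare:
  fixes f :: "complex \<Rightarrow> complex"
  assumes "f holomorphic_on UNIV" "\<And>w. f (- w) = f w"
  shows "(\<lambda>k. (deriv ^^ (2 * k)) f 0 / fact (2 * k) * (w ^ 2) ^ k) sums f w"
proof -
  define a where "a m = (deriv ^^ m) f 0 / fact m" for m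
  have taylor: "(\<lambda>m. a m * v ^ m) sums f v" for v
    using holomorphic_power_series[of f 0 "norm v + 1" v] assms(1) holomorphic_on_subset
    by (auto simp: a_def)
  have "(\<lambda>m. (a m * w ^ m + a m * (- w) ^ m) / 2) sums ((f w + f (- w)) / 2)"
    by (intro sums_divide sums_add taylor)
  then have "(\<lambda>m. (a m * w ^ m + a m * (- w) ^ m) / 2) sums f w"
    using assms(2) by simp
  then have "(\<lambda>k. (a (2 * k) * w ^ (2 * k) + a (2 * k) * (- w) ^ (2 * k)) / 2) sums f w"
  proof (subst (asm) sums_mono_reindex[of "(*) 2", symmetric])
    fix n :: nat assume "n \<notin> range ((*) 2)"
    then have "odd n" by (metis dvd_mult_div_cancel rangeI)
    then show "(a n * w ^ n + a n * (- w) ^ n) / 2 = 0" by (simp add: power_minus_odd)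
  qed (auto simp: strict_mono_def)
  moreover have "(a (2 * k) * w ^ (2 * k) + a (2 * k) * (- w) ^ (2 * k)) / 2
      = (deriv ^^ (2 * k)) f 0 / fact (2 * k) * (w ^ 2) ^ k" for k
    by (simp add: a_def power_mult)
  ultimately show ?thesis
    by simp
qed

lemma unsquare_square:
  assumes "f holomorphic_on UNIV" "\<And>w. f (- w) = f w"
  shows "unsquare f (w ^ 2) = f w"
  using sums_unsquare[OF assms] unfolding unsquare_def by (simp add: sums_iff)

lemma holomorphic_unsquare:
  assumes "f holomorphic_on UNIV" "\<And>w. f (- w) = f w"
  shows "unsquare f holomorphic_on UNIV"
proof -
  have "summable (\<lambda>k. (deriv ^^ (2 * k)) f 0 / fact (2 * k) * u ^ k)" for u
    using sums_unsquare[OF assms, of "csqrt u"] by (auto simp: sums_iff)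
  then have "(unsquare f has_field_derivative
      (\<Sum>n. diffs (\<lambda>k. (deriv ^^ (2 * k)) f 0 / fact (2 * k)) n * u ^ n)) (at u)" for u
    unfolding unsquare_def[abs_def] by (rule termdiffs_strong_converges_everywhere)
  then show ?thesis
    by (auto simp: holomorphic_on_open)
qed

lemma unsquare_poly:
  assumes "(pderiv ^^ (2 * m)) P = 0"
  obtains \<pi> where "unsquare (poly P) = poly \<pi>" and "(pderiv ^^ m) \<pi> = 0"
proof
  define a where "a k = (deriv ^^ (2 * k)) (poly P) 0 / fact (2 * k)" for k
  define \<pi> where "\<pi> = (\<Sum>k<m. monom (a k) k)"
  show "unsquare (poly P) = poly \<pi>"
  proof
    fix u
    have "(\<lambda>k. a k * u ^ k) sums (\<Sum>k<m. a k * u ^ k)"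
    proof (rule sums_finite)
      fix k assume "k \<notin> {..<m}"
      then have "(pderiv ^^ (2 * k)) P = 0"
        by (intro higher_pderiv_eq_0_mono[OF assms]) auto
      then show "a k * u ^ k = 0" by (simp add: a_def higher_deriv_poly)
    qed simp
    then show "unsquare (poly P) u = poly \<pi> u"
      unfolding unsquare_def \<pi>_def a_def[symmetric] by (simp add: sums_iff poly_sum poly_monom)
  qed
  show "(pderiv ^^ m) \<pi> = 0"
    by (rule poly_eqI) (simp add: coeff_higher_pderiv \<pi>_def coeff_sum)
qed

lemma higher_deriv_compose_eq_0:
  fixes h f :: "complex \<Rightarrow> complex"
  assumes "h holomorphic_on T" "open T" "f holomorphic_on S" "open S" "f ` S \<subseteq> T" "x \<in> S"
    and "\<forall>j<n. (deriv ^^ j) h (f x) = 0"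
  shows "j < n \<Longrightarrow> (deriv ^^ j) (\<lambda>y. h (f y)) x = 0"
  using assms(1,7)
proof (induction n arbitrary: h j)
  case (Suc n h j)
  show ?case
  proof (cases j)
    case 0
    then show ?thesis using Suc.prems(3) by (metis funpow_0 zero_less_Suc)
  next
    case (Suc i)
    have dh: "deriv h holomorphic_on T" using Suc.prems(2) assms(2) by (rule holomorphic_deriv)
    have df: "deriv f holomorphic_on S" using assms(3,4) by (rule holomorphic_deriv)
    have hf: "(\<lambda>y. h (f y)) holomorphic_on S" "(\<lambda>y. deriv h (f y)) holomorphic_on S"
      using holomorphic_on_compose_gen[OF assms(3) Suc.prems(2) assms(5)]
        holomorphic_on_compose_gen[OF assms(3) dh assms(5)]
      by (simp_all add: o_def)
    have chain: "deriv (\<lambda>y. h (f y)) y = deriv h (f y) * deriv f y" if "y \<in> S" for y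
    proof -
      have "f y \<in> T" using assms(5) that by blast
      then have "f field_differentiable at y" "h field_differentiable at (f y)"
        using holomorphic_on_imp_differentiable_at[OF assms(3,4) that]
          holomorphic_on_imp_differentiable_at[OF Suc.prems(2) assms(2)] by blast+
      then show ?thesis using deriv_chain[of f y h] by (simp add: o_def)
    qed
    have IH: "(deriv ^^ l) (\<lambda>y. deriv h (f y)) x = 0" if "l < n" for l
    proof (rule Suc.IH[OF that dh], intro allI impI)
      fix j assume "j < n"
      then show "(deriv ^^ j) (deriv h) (f x) = 0"
        using Suc.prems(3) by (metis Suc_mono funpow_Suc_right o_apply)
    qed
    have "(deriv ^^ j) (\<lambda>y. h (f y)) x = (deriv ^^ i) (deriv (\<lambda>y. h (f y))) x"
      using Suc by (simp add: funpow_Suc_right del: funpow.simps)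
    also have "\<dots> = (deriv ^^ i) (\<lambda>y. deriv h (f y) * deriv f y) x"
      by (rule higher_deriv_transform_within_open[OF holomorphic_deriv[OF hf(1) assms(4)]
            holomorphic_on_mult[OF hf(2) df] assms(4,6) chain])
    also have "\<dots> = (\<Sum>l = 0..i. of_nat (i choose l) * (deriv ^^ l) (\<lambda>y. deriv h (f y)) x
                                   * (deriv ^^ (i - l)) (deriv f) x)"
      by (rule higher_deriv_mult[OF hf(2) df assms(4,6)])
    also have "\<dots> = 0"
      using IH Suc Suc.prems(1) by (intro sum.neutral) auto
    finally show ?thesis .
  qed
qed simp

lemma higher_deriv_Re_of_real:
  fixes g :: "complex \<Rightarrow> complex"
  assumes "g holomorphic_on UNIV"
  shows "(deriv ^^ k) (\<lambda>t. Re (g (of_real t))) = (\<lambda>t. Re ((deriv ^^ k) g (of_real t)))"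
proof (induction k)
  case (Suc k)
  have "((deriv ^^ k) g has_field_derivative (deriv ^^ Suc k) g (of_real t)) (at (of_real t))" for t
    using has_field_derivative_higher_deriv[OF assms] by simp
  then have "((\<lambda>t. Re ((deriv ^^ k) g (of_real t))) has_real_derivative
      Re ((deriv ^^ Suc k) g (of_real t))) (at t)" for t
    by (intro has_field_derivative_Re has_vector_derivative_real_field)
  then have "deriv (\<lambda>t. Re ((deriv ^^ k) g (of_real t))) t = Re ((deriv ^^ Suc k) g (of_real t))" for t
    by (rule DERIV_imp_deriv)
  then show ?case
    by (simp add: Suc.IH fun_eq_iff)
qed simp

lemma real_analytic_on_Re_of_real:
  fixes g :: "complex \<Rightarrow> complex"
  assumes "g holomorphic_on UNIV"
  shows "real_analytic_on UNIV (\<lambda>t. Re (g (of_real t)))"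
  unfolding real_analytic_on_def
proof
  fix x :: real
  define a where "a k = Re ((deriv ^^ k) g (of_real x) / fact k)" for k
  have "(\<lambda>k. a k * (y - x) ^ k) sums Re (g (of_real y))" for y
  proof -
    have "(\<lambda>k. (deriv ^^ k) g (of_real x) / fact k * (of_real y - of_real x) ^ k) sums g (of_real y)"
      using holomorphic_power_series[of g "of_real x" "\<bar>y - x\<bar> + 1" "of_real y"] assms
        holomorphic_on_subset
      by (auto simp: dist_norm simp flip: of_real_diff)
    from sums_Re[OF this]
    have "(\<lambda>k. Re ((deriv ^^ k) g (of_real x) / fact k * of_real ((y - x) ^ k)))
        sums Re (g (of_real y))"
      by (simp flip: of_real_diff of_real_power)
    moreover have Re_scale: "Re (w * of_real t) = Re w * t" for w t
      by simp
    ultimately show ?thesis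
      by (simp only: a_def Re_scale)
  qed
  then show "\<exists>a d. d > 0 \<and> (\<forall>y. \<bar>y - x\<bar> < d \<longrightarrow> (\<lambda>k. a k * (y - x) ^ k) sums Re (g (of_real y)))"
    by (intro exI[of _ a] exI[of _ 1]) simp
qed

lemma derivatives_eq_higher_deriv_of_real:
  fixes D :: "nat \<Rightarrow> real \<Rightarrow> real" and Z :: "complex \<Rightarrow> complex"
  assumes "Z holomorphic_on UNIV" "a < b"
    and "\<forall>x\<in>{a..b}. of_real (D 0 x) = Z (of_real x)"
    and "\<forall>k<N. \<forall>x\<in>{a..b}. (D k has_real_derivative D (Suc k) x) (at x within {a..b})"
  shows "k \<le> N \<Longrightarrow> x \<in> {a..b} \<Longrightarrow> of_real (D k x) = (deriv ^^ k) Z (of_real x)"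
proof (induction k arbitrary: x)
  case (Suc k)
  have "((deriv ^^ k) Z has_field_derivative (deriv ^^ Suc k) Z (of_real x)) (at (of_real x))"
    using has_field_derivative_higher_deriv[OF assms(1) open_UNIV UNIV_I] by simp
  then have Z_deriv: "((\<lambda>t. (deriv ^^ k) Z (of_real t)) has_vector_derivative (deriv ^^ Suc k) Z (of_real x))
      (at x within {a..b})"
    by (rule has_vector_derivative_at_within[OF has_vector_derivative_real_field])
  have "((\<lambda>t. complex_of_real (D k t)) has_vector_derivative of_real (D (Suc k) x))
      (at x within {a..b})"
    using assms(4) Suc.prems by (intro has_vector_derivative_of_real) auto
  moreover have "((\<lambda>t. complex_of_real (D k t)) has_vector_derivative (deriv ^^ Suc k) Z (of_real x))
      (at x within {a..b})"
    by (rule has_vector_derivative_transform[OF Suc.prems(2) _ Z_deriv]) (use Suc in auto)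
  ultimately show ?case
    by (rule vector_derivative_unique_within_closed_interval[OF assms(2), unfolded cbox_interval,
          OF Suc.prems(2)])
qed (use assms(3) in auto)

lemma eigenfunction_entire_extension:
  fixes Z :: "complex \<Rightarrow> complex"
  assumes "eigenfunction p n Lam z" "Z holomorphic_on UNIV"
    and "\<forall>x\<in>{-1..1}. Z (of_real x) = of_real (z x)"
  shows "x \<in> {-1..1} \<Longrightarrow>
           (deriv ^^ (2 * n)) Z (of_real x) = (-1) ^ p * of_real Lam * (deriv ^^ (2 * n - 2 * p)) Z (of_real x)"
    and "j < n \<Longrightarrow> (deriv ^^ j) Z 1 = 0"
proof -
  obtain D :: "nat \<Rightarrow> real \<Rightarrow> real" where
    D0: "\<forall>x\<in>{-1..1}. D 0 x = z x" and
    D_deriv: "\<forall>k<2*n. \<forall>x\<in>{-1..1}. (D k has_real_derivative D (Suc k) x) (at x within {-1..1})" and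
    ode: "\<forall>x\<in>{-1..1}. (-1)^n * D (2*n) x - Lam * (-1)^(n-p) * D (2*n-2*p) x = 0" and
    boundary: "\<forall>j<n. D j (-1) = 0 \<and> D j 1 = 0" and "p \<le> n"
    using assms(1) unfolding eigenfunction_def by blast
  have D_Z: "of_real (D k x) = (deriv ^^ k) Z (of_real x)" if "k \<le> 2 * n" "x \<in> {-1..1}" for k x
    by (rule derivatives_eq_higher_deriv_of_real[OF assms(2) _ _ D_deriv that]) (use D0 assms(3) in auto)
  have "(-1::real) ^ n * (-1) ^ (n - p) = (-1) ^ (n + (n - p))"
    by (rule power_add[symmetric])
  also have "n + (n - p) = p + 2 * (n - p)"
    using \<open>p \<le> n\<close> by simp
  also have "(-1::real) ^ (p + 2 * (n - p)) = (-1) ^ p"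
    by (simp add: power_add power_mult)
  finally have sign: "(-1::real) ^ n * (-1) ^ (n - p) = (-1) ^ p" .
  show "(deriv ^^ (2 * n)) Z (of_real x) = (-1) ^ p * of_real Lam * (deriv ^^ (2 * n - 2 * p)) Z (of_real x)"
    if "x \<in> {-1..1}"
  proof -
    have ode_x: "(-1) ^ n * D (2 * n) x = Lam * (-1) ^ (n - p) * D (2 * n - 2 * p) x"
      using ode that by simp
    have "D (2 * n) x = (-1) ^ n * ((-1) ^ n * D (2 * n) x)"
      by (simp flip: mult.assoc power_add)
    also have "\<dots> = ((-1) ^ n * (-1) ^ (n - p)) * Lam * D (2 * n - 2 * p) x"
      unfolding ode_x by (simp only: mult_ac)
    finally have "D (2 * n) x = (-1) ^ p * Lam * D (2 * n - 2 * p) x"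
      by (simp only: sign)
    then show ?thesis
      using D_Z[OF _ that, of "2 * n"] D_Z[OF _ that, of "2 * n - 2 * p"] by simp
  qed
  show "(deriv ^^ j) Z 1 = 0" if "j < n"
    using D_Z[of j 1] boundary that by simp
qed

lemma higher_deriv_unsquare_eq_0:
  fixes R :: "complex \<Rightarrow> complex"
  assumes "R holomorphic_on UNIV" "\<And>w. R (- w) = R w" "\<And>w. poly P (- w) = poly P w"
    and "(pderiv ^^ (2 * m)) P = 0"
    and "\<forall>j<n. (deriv ^^ j) (\<lambda>w. R w + poly P w) 1 = 0"
    and "m \<le> k" "k < n"
  shows "(deriv ^^ k) (unsquare R) 1 = 0"
proof -
  obtain \<pi> where \<pi>: "unsquare (poly P) = poly \<pi>" "(pderiv ^^ m) \<pi> = 0"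
    using unsquare_poly[OF assms(4)] .
  have "poly P holomorphic_on UNIV" "poly \<pi> holomorphic_on UNIV"
    by (intro holomorphic_intros)+
  have sq: "unsquare R u + poly \<pi> u = R (csqrt u) + poly P (csqrt u)" for u
    using unsquare_square[OF assms(1,2), of "csqrt u"]
      unsquare_square[OF \<open>poly P holomorphic_on UNIV\<close> assms(3), of "csqrt u"]
    unfolding \<pi>(1) power2_csqrt by simp
  have "(deriv ^^ k) (unsquare R) 1 + (deriv ^^ k) (poly \<pi>) 1
      = (deriv ^^ k) (\<lambda>u. unsquare R u + poly \<pi> u) 1"
    by (rule higher_deriv_add[OF holomorphic_unsquare[OF assms(1,2)] \<open>poly \<pi> holomorphic_on UNIV\<close>,
          symmetric]) auto
  also have "\<dots> = (deriv ^^ k) (\<lambda>u. R (csqrt u) + poly P (csqrt u)) 1"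
    by (simp only: sq)
  also have "\<dots> = 0"
  proof (rule higher_deriv_compose_eq_0[where h="\<lambda>w. R w + poly P w" and f=csqrt
        and S="{u. 0 < Re u}" and T=UNIV])
    show "csqrt holomorphic_on {u. 0 < Re u}"
      by (rule holomorphic_on_subset[OF holomorphic_on_csqrt]) (auto simp: complex_nonpos_Reals_iff)
  qed (use assms(5,7) in \<open>auto intro!: holomorphic_intros assms(1) simp: open_halfspace_Re_gt\<close>)
  finally show ?thesis
    using higher_pderiv_eq_0_mono[OF \<pi>(2) assms(6)] by (simp add: higher_deriv_poly)
qed

lemma unsquare_real_restriction:
  fixes R :: "complex \<Rightarrow> complex"
  assumes "R holomorphic_on UNIV" "\<And>w. R (- w) = R w" "\<And>x. R (of_real x) \<in> \<real>"
  defines "\<rho> \<equiv> \<lambda>t. Re (unsquare R (of_real t))"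
  shows "real_analytic_on UNIV \<rho>"
    and "R (of_real x) = of_real (\<rho> (x ^ 2))"
    and "(deriv ^^ k) \<rho> t = Re ((deriv ^^ k) (unsquare R) (of_real t))"
proof -
  note holo = holomorphic_unsquare[OF assms(1,2)]
  show "real_analytic_on UNIV \<rho>"
    unfolding \<rho>_def by (rule real_analytic_on_Re_of_real[OF holo])
  show "R (of_real x) = of_real (\<rho> (x ^ 2))"
    using unsquare_square[OF assms(1,2), of "of_real x"] assms(3)[of x]
    unfolding \<rho>_def by (simp add: complex_eq_iff)
  show "(deriv ^^ k) \<rho> t = Re ((deriv ^^ k) (unsquare R) (of_real t))"
    unfolding \<rho>_def higher_deriv_Re_of_real[OF holo] ..
qed

lemma exp_sum_of_even_eigenfunction:
  assumes "p \<ge> 1" "Lam > 0" "eigenfunction p n Lam z" "\<forall>x\<in>{-1..1}. z (- x) = z x"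
    and roots: "\<forall>j<2 * p. \<mu> j ^ (2 * p) = (-1) ^ p * of_real Lam"
    and on_interval:
      "\<forall>x\<in>{-1..1}. exp_sum (2 * p) r \<mu> (of_real x) + poly P (of_real x) = of_real (z x)"
  shows "exp_sum (2 * p) r \<mu> (- w) = exp_sum (2 * p) r \<mu> w"
    and "exp_sum (2 * p) r \<mu> (of_real x) \<in> \<real>"
    and "n - p \<le> k \<Longrightarrow> k < n \<Longrightarrow> (deriv ^^ k) (unsquare (exp_sum (2 * p) r \<mu>)) 1 = 0"
proof -
  define R where "R = exp_sum (2 * p) r \<mu>"
  have c: "(-1) ^ p * complex_of_real Lam \<noteq> 0" "(-1) ^ p * complex_of_real Lam \<in> \<real>"
    using assms(2) by auto
  have "p \<le> n"
    using assms(3) by (simp add: eigenfunction_def)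
  have R_holo: "R holomorphic_on UNIV" and holo: "(\<lambda>w. R w + poly P w) holomorphic_on UNIV"
    unfolding R_def by (intro holomorphic_intros)+
  note extension = eigenfunction_entire_extension[OF assms(3) holo on_interval[folded R_def]]
  have P_part: "(pderiv ^^ (2 * (n - p))) P = 0"
  proof (rule higher_pderiv_eq_0_if_exp_poly_ode[OF roots c(1)])
    fix x :: real assume "x \<in> {-1<..<1}"
    then show "(deriv ^^ (2 * (n - p) + 2 * p)) (\<lambda>w. exp_sum (2 * p) r \<mu> w + poly P w) (of_real x)
        = (-1) ^ p * of_real Lam
          * (deriv ^^ (2 * (n - p))) (\<lambda>w. exp_sum (2 * p) r \<mu> w + poly P w) (of_real x)"
      using extension(1)[of x] \<open>p \<le> n\<close> by (simp add: R_def algebra_simps)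
  qed (use assms(1) in auto)
  have "R (of_real x) + poly P (of_real x) = R (- of_real x) + poly P (- of_real x)"
    if "x \<in> {-1<..<1}" for x
    using on_interval[rule_format, of x] on_interval[rule_format, of "- x"] assms(4) that
    by (auto simp: R_def)
  then have even: "R (- w) = R w" "poly P (- w) = poly P w" for w
    using exp_sum_even_if_exp_poly_even[OF roots _ c(1), of r P w] assms(1)
    unfolding R_def by auto
  then show "exp_sum (2 * p) r \<mu> (- w) = exp_sum (2 * p) r \<mu> w"
    by (simp add: R_def)
  show "exp_sum (2 * p) r \<mu> (of_real x) \<in> \<real>"
    using exp_sum_real_if_exp_poly_real[OF roots c(2,1), of r P x] on_interval assms(1) by auto
  show "(deriv ^^ k) (unsquare (exp_sum (2 * p) r \<mu>)) 1 = 0" if "n - p \<le> k" "k < n"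
    using higher_deriv_unsquare_eq_0[OF R_holo even P_part _ that] extension(2)
    by (simp add: R_def)
qed

theorem mainTheorem9:
  fixes p n :: nat and Lam :: real and z :: "real \<Rightarrow> real"
    and lam r :: "nat \<Rightarrow> complex" and P :: "complex poly"
  assumes "p \<ge> 1" and "n > p" and "Lam > 0"
    and "eigenfunction p n Lam z"
    and "\<forall>x\<in>{-1..1}. z (-x) = z x"
    and "\<forall>j<2*p. lam j ^ (2*p) = complex_of_real Lam"
    and "inj_on lam {..<2*p}"
    and "\<forall>x\<in>{-1..1}. complex_of_real (z x) =
           (\<Sum>j<2*p. r j * exp (\<i> * lam j * complex_of_real x)) + poly P (complex_of_real x)"
  shows "(\<forall>x::real. (\<Sum>j<2*p. r j * exp (\<i> * lam j * complex_of_real (-x)))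
                 = (\<Sum>j<2*p. r j * exp (\<i> * lam j * complex_of_real x)))
       \<and> (\<exists>\<rho> :: real \<Rightarrow> real. real_analytic_on UNIV \<rho>
            \<and> (\<forall>x::real. (\<Sum>j<2*p. r j * exp (\<i> * lam j * complex_of_real x))
                          = complex_of_real (\<rho> (x^2)))
            \<and> (\<forall>k\<in>{n-p..n-1}. (deriv ^^ k) \<rho> 1 = 0))"
proof -
  define R where "R = exp_sum (2 * p) r (\<lambda>j. \<i> * lam j)"
  have R_eq: "(\<Sum>j<2*p. r j * exp (\<i> * lam j * w)) = R w" for w
    by (simp add: R_def exp_sum_def)
  have roots: "\<forall>j<2*p. (\<i> * lam j) ^ (2*p) = (-1) ^ p * of_real Lam"
    using assms(6) by (simp add: power_mult_distrib power_mult power_minus[of "(lam _)\<^sup>2"])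
  have "\<forall>x\<in>{-1..1}. R (of_real x) + poly P (of_real x) = of_real (z x)"
    using assms(8) R_eq by simp
  note R_props =
    exp_sum_of_even_eigenfunction[OF assms(1,3,4,5) roots this[unfolded R_def], folded R_def]
  have "R holomorphic_on UNIV"
    unfolding R_def by (intro holomorphic_intros)
  note \<rho> = unsquare_real_restriction[OF this R_props(1,2)]
  show ?thesis
  proof (intro conjI allI exI[of _ "\<lambda>t. Re (unsquare R (of_real t))"] ballI)
    show "(\<Sum>j<2*p. r j * exp (\<i> * lam j * of_real (- x)))
        = (\<Sum>j<2*p. r j * exp (\<i> * lam j * of_real x))" for x :: real
      unfolding R_eq using R_props(1) by simp
    fix k assume "k \<in> {n - p..n - 1}"
    then show "(deriv ^^ k) (\<lambda>t. Re (unsquare R (of_real t))) 1 = 0"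
      using R_props(3) assms(2) \<rho>(3)[of k 1] by auto
  qed (use \<rho>(1,2) in \<open>simp_all add: R_eq\<close>)
qed

end
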